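(* Let $z(s)$ be an orbit of the Hamiltonian $G_{\epsilon,0}$ which remains in a bounded region $\Omega\subset T^*\mathbb{T}^2$ for $s\in[s_0,s_1]$. Then there exists a constant $K>0$, independent of $\epsilon$, such that $$|G_{\epsilon,0}(z(s_1),s_1)-G_{\epsilon,0}(z(s_0),s_0)|\le K|s_1-s_0+1|\epsilon^\sigma.$$
   Context: $G_{\epsilon,0}(x,y,\theta)=\frac12\langle Ay,y\rangle-V(x)+\epsilon^\sigma R_{\epsilon,0}(x,y,\theta)$ on $T^*\mathbb{T}^2$ with time $\theta$, where $A$ is positive definite symmetric, $V\in C^r(\mathbb{T}^2,\mathbb{R})$, $\sigma\in(0,\frac12)$, $\omega_3\neq0$ is a fixed constant, and $R_{\epsilon,0}(x,y,\theta)$ depends on $\theta$ through $\tau=\omega_3\theta/\sqrt\epsilon$, being $2\pi$-periodic in $\tau$ and $C^4$-smooth with $C^4$ norms (also of $\partial_zR_{\epsilon,0}$) bounded on bounded sets uniformly in $\epsilon$. *)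

theory Defs
  imports "HOL-Analysis.Analysis"
begin

fun pderivs :: "'a::euclidean_space list \<Rightarrow> ('a \<Rightarrow> real) \<Rightarrow> 'a \<Rightarrow> real" where
  "pderivs [] f = f"
| "pderivs (v # vs) f = (\<lambda>x. frechet_derivative (pderivs vs f) (at x) v)"

definition Ck :: "nat \<Rightarrow> ('a::euclidean_space \<Rightarrow> real) \<Rightarrow> bool" where
  "Ck k f \<longleftrightarrow>
     (\<forall>vs. set vs \<subseteq> Basis \<and> length vs \<le> k \<longrightarrow>
        continuous_on UNIV (pderivs vs f) \<and>
        (length vs < k \<longrightarrow> (\<forall>x. pderivs vs f differentiable (at x))))"

definition Ck_norm_le :: "nat \<Rightarrow> ('a::euclidean_space \<Rightarrow> real) \<Rightarrow> 'a set \<Rightarrow> real \<Rightarrow> bool" where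
  "Ck_norm_le k f S M \<longleftrightarrow>
     (\<forall>vs. set vs \<subseteq> Basis \<and> length vs \<le> k \<longrightarrow> (\<forall>p\<in>S. \<bar>pderivs vs f p\<bar> \<le> M))"

text \<open>The Hamiltonian G_{eps,0}(x,y,theta) = 1/2 <Ay,y> - V(x) + eps^sigma R_eps(x,y,omega3 theta/sqrt eps),
  written on the universal cover R^2 x R^2 of T^*T^2 (x is the lifted angle).\<close>
definition G_eps :: "real^2^2 \<Rightarrow> (real^2 \<Rightarrow> real) \<Rightarrow> (real \<Rightarrow> real^2 \<Rightarrow> real^2 \<Rightarrow> real \<Rightarrow> real)
    \<Rightarrow> real \<Rightarrow> real \<Rightarrow> real \<Rightarrow> real^2 \<Rightarrow> real^2 \<Rightarrow> real \<Rightarrow> real" where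
  "G_eps A V R \<sigma> \<omega>3 \<epsilon> x y \<theta> =
     1/2 * (y \<bullet> (A *v y)) - V x + \<epsilon> powr \<sigma> * R \<epsilon> x y (\<omega>3 * \<theta> / sqrt \<epsilon>)"

definition ham_orbit :: "(real^2 \<Rightarrow> real^2 \<Rightarrow> real \<Rightarrow> real) \<Rightarrow> (real \<Rightarrow> real^2) \<Rightarrow> (real \<Rightarrow> real^2)
    \<Rightarrow> real \<Rightarrow> real \<Rightarrow> bool" where
  "ham_orbit H x y s0 s1 \<longleftrightarrow>
     (\<forall>s\<in>{s0..s1}. \<exists>gx gy.
        GDERIV (\<lambda>u. H u (y s) s) (x s) :> gx \<and>
        GDERIV (\<lambda>v. H (x s) v s) (y s) :> gy \<and>
        (x has_vector_derivative gy) (at s within {s0..s1}) \<and>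
        (y has_vector_derivative - gx) (at s within {s0..s1}))"

end

theory Submission
  imports Defs
begin

text \<open>
  Split the Hamiltonian as \<open>G = H\<^sub>0 + \<epsilon>\<^sup>\<sigma> R\<close> with the autonomous part
  \<open>H\<^sub>0(x, y) = \<langle>Ay, y\<rangle>/2 - V(x)\<close>. Along an orbit, \<open>dH\<^sub>0/ds\<close> is the Poisson bracket
  \<open>{H\<^sub>0, \<epsilon>\<^sup>\<sigma> R} = -\<epsilon>\<^sup>\<sigma> (\<langle>\<partial>\<^sub>yR, \<nabla>V\<rangle> + \<langle>\<partial>\<^sub>xR, Ay\<rangle>)\<close>: only the spatial derivatives of
  \<open>R\<close> enter, never the derivative in the fast time \<open>\<tau> = \<omega>\<^sub>3 \<theta> / \<surd>\<epsilon>\<close>, which is of order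
  \<open>1/\<surd>\<epsilon>\<close>. Periodicity in \<open>x\<close> and boundedness of \<open>y\<close> on \<open>\<Omega>\<close> bound \<open>\<partial>\<^sub>xR\<close>, \<open>\<partial>\<^sub>yR\<close>,
  \<open>\<nabla>V\<close> and \<open>Ay\<close> uniformly in \<open>\<epsilon>\<close>, so \<open>H\<^sub>0\<close> drifts by \<open>O(\<epsilon>\<^sup>\<sigma> |s\<^sub>1 - s\<^sub>0|)\<close>, while the
  term \<open>\<epsilon>\<^sup>\<sigma> R\<close> itself changes by at most \<open>2 \<epsilon>\<^sup>\<sigma> sup |R|\<close>.
\<close>

lemma Ck_differentiable:
  assumes "Ck k f" and "1 \<le> k"
  shows "f differentiable at x"
  using assms unfolding Ck_def by (drule_tac x="[]" in spec) simp

lemma Ck_continuous_partial: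
  assumes "Ck k f" and "1 \<le> k" and "b \<in> Basis"
  shows "continuous_on UNIV (\<lambda>x. frechet_derivative f (at x) b)"
  using assms unfolding Ck_def by (drule_tac x="[b]" in spec) simp

lemma Ck_norm_le_value:
  assumes "Ck_norm_le k f S M" and "p \<in> S"
  shows "\<bar>f p\<bar> \<le> M"
  using assms unfolding Ck_norm_le_def by (drule_tac x="[]" in spec) simp

lemma Ck_norm_le_partial:
  assumes "Ck_norm_le k f S M" and "1 \<le> k" and "p \<in> S" and "b \<in> Basis"
  shows "\<bar>frechet_derivative f (at p) b\<bar> \<le> M"
  using assms unfolding Ck_norm_le_def by (drule_tac x="[b]" in spec) simp

section \<open>Functions periodic along the coordinate axes\<close>

lemma frechet_derivative_periodic:
  fixes f :: "'a::real_normed_vector \<Rightarrow> real"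
  assumes periodic: "\<forall>q. f (q + c) = f q" and "f differentiable at p"
  shows "frechet_derivative f (at (p + c)) = frechet_derivative f (at p)"
proof -
  let ?D = "frechet_derivative f (at p)"
  have shift: "((\<lambda>q. q - c) has_derivative (\<lambda>h. h)) (at (p + c))"
    by (auto intro!: derivative_eq_intros)
  have "((\<lambda>q. f (q - c)) has_derivative ?D) (at (p + c))"
    using has_derivative_compose[OF shift, of f ?D] \<open>f differentiable at p\<close>
    by (simp add: frechet_derivative_works)
  moreover have "(\<lambda>q. f (q - c)) = f"
  proof
    fix q
    show "f (q - c) = f q"
      using periodic[rule_format, of "q - c"] by simp
  qed
  ultimately show ?thesis
    using frechet_derivative_at by metis
qed

lemma periodic_int_multiple:
  fixes g :: "'a::real_vector \<Rightarrow> 'b"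
  assumes periodic: "\<forall>x. g (x + c) = g x"
  shows "g (x + of_int k *\<^sub>R c) = g x"
proof -
  have nat_multiple: "g (z + real n *\<^sub>R c) = g z" for z n
  proof (induction n arbitrary: z)
    case (Suc n)
    have "g (z + real (Suc n) *\<^sub>R c) = g ((z + real n *\<^sub>R c) + c)"
      by (simp add: algebra_simps)
    also have "\<dots> = g z"
      using Suc.IH periodic by simp
    finally show ?case .
  qed simp
  show ?thesis
  proof (cases "k \<ge> 0")
    case True
    then show ?thesis using nat_multiple[of x "nat k"] by simp
  next
    case False
    have "x = (x + of_int k *\<^sub>R c) + real (nat (- k)) *\<^sub>R c"
      using False by (simp add: algebra_simps flip: scaleR_left_distrib)
    then have "g x = g ((x + of_int k *\<^sub>R c) + real (nat (- k)) *\<^sub>R c)"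
      by (rule arg_cong)
    also have "\<dots> = g (x + of_int k *\<^sub>R c)"
      by (rule nat_multiple)
    finally show ?thesis by (rule sym)
  qed
qed

lemma periodic_sum_Basis_multiples:
  fixes g :: "'a::euclidean_space \<Rightarrow> 'b"
  assumes periodic: "\<forall>x. \<forall>e\<in>Basis. g (x + p *\<^sub>R e) = g x" and "I \<subseteq> Basis"
  shows "g (x + (\<Sum>e\<in>I. (of_int (k e) * p) *\<^sub>R e)) = g x"
  using finite_subset[OF \<open>I \<subseteq> Basis\<close> finite_Basis] \<open>I \<subseteq> Basis\<close>
proof (induction I arbitrary: x rule: finite_induct)
  case (insert e I)
  have "g (x + (\<Sum>e\<in>insert e I. (of_int (k e) * p) *\<^sub>R e))
      = g ((x + (\<Sum>e\<in>I. (of_int (k e) * p) *\<^sub>R e)) + of_int (k e) *\<^sub>R (p *\<^sub>R e))"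
    using insert.hyps by (simp add: algebra_simps)
  also have "\<dots> = g x"
    using insert periodic_int_multiple[of g "p *\<^sub>R e"] periodic by simp
  finally show ?case .
qed simp

lemma periodic_eq_at_cube_point:
  fixes g :: "'a::euclidean_space \<Rightarrow> 'b"
  assumes periodic: "\<forall>x. \<forall>e\<in>Basis. g (x + p *\<^sub>R e) = g x" and "p > 0"
  shows "\<exists>x'\<in>cbox 0 (\<Sum>e\<in>Basis. p *\<^sub>R e). g x = g x'"
proof -
  define k where "k e = \<lfloor>(x \<bullet> e) / p\<rfloor>" for e
  define x' where "x' = (\<Sum>e\<in>Basis. (x \<bullet> e - of_int (k e) * p) *\<^sub>R e)"
  have "x = x' + (\<Sum>e\<in>Basis. (of_int (k e) * p) *\<^sub>R e)"
    by (simp add: x'_def algebra_simps scaleR_diff_left sum_subtractf euclidean_representation)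
  then have "g x = g x'"
    using periodic_sum_Basis_multiples[OF periodic order_refl] by metis
  moreover have "x' \<in> cbox 0 (\<Sum>e\<in>Basis. p *\<^sub>R e)"
  proof -
    have "0 \<le> x \<bullet> e - of_int (k e) * p \<and> x \<bullet> e - of_int (k e) * p \<le> p" for e
    proof -
      have "of_int (k e) \<le> (x \<bullet> e) / p" "(x \<bullet> e) / p < of_int (k e) + 1"
        unfolding k_def by linarith+
      then show ?thesis
        using \<open>p > 0\<close> by (simp add: field_simps)
    qed
    then show ?thesis
      by (simp add: mem_box x'_def inner_sum_left inner_Basis if_distrib cong: if_cong)
  qed
  ultimately show ?thesis by blast
qed

lemma periodic_continuous_bounded:
  fixes f :: "'a::euclidean_space \<Rightarrow> real"
  assumes "continuous_on UNIV f" and "\<forall>x. \<forall>e\<in>Basis. f (x + p *\<^sub>R e) = f x" and "p > 0"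
  obtains B where "\<And>x. \<bar>f x\<bar> \<le> B"
proof -
  let ?cube = "cbox 0 (\<Sum>e\<in>Basis. p *\<^sub>R e) :: 'a set"
  have "compact (f ` ?cube)"
    by (rule compact_continuous_image[OF continuous_on_subset[OF assms(1)]]) auto
  then obtain B where "\<forall>z\<in>f ` ?cube. \<bar>z\<bar> \<le> B"
    using compact_imp_bounded bounded_real by meson
  then have "\<bar>f x\<bar> \<le> B" for x
    using periodic_eq_at_cube_point[OF assms(2,3), of x] by fastforce
  then show ?thesis using that by blast
qed

section \<open>Gradients and their bounds\<close>

lemma gderiv_unique:
  assumes "GDERIV f x :> g" and "GDERIV f x :> g'"
  shows "g = g'"
proof -
  have "(\<lambda>h. h \<bullet> g) = (\<lambda>h. h \<bullet> g')"
    using assms unfolding gderiv_def by (rule has_derivative_unique)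
  from fun_cong[OF this, of "g - g'"] have "(g - g') \<bullet> (g - g') = 0"
    by (simp add: inner_diff_right)
  then show ?thesis by simp
qed

lemma gderiv_of_has_derivative:
  fixes f :: "'a::euclidean_space \<Rightarrow> real"
  assumes "(f has_derivative L) (at x)"
  shows "GDERIV f x :> (\<Sum>b\<in>Basis. L b *\<^sub>R b)"
proof -
  have "linear L"
    using assms by (rule has_derivative_linear)
  have "h \<bullet> (\<Sum>b\<in>Basis. L b *\<^sub>R b) = L h" for h
  proof -
    have "L h = L (\<Sum>b\<in>Basis. (h \<bullet> b) *\<^sub>R b)"
      by (simp add: euclidean_representation)
    also have "\<dots> = (\<Sum>b\<in>Basis. (h \<bullet> b) * L b)"
      by (simp add: linear_sum[OF \<open>linear L\<close>] linear_scale[OF \<open>linear L\<close>])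
    finally show ?thesis
      by (simp add: inner_sum_right mult.commute)
  qed
  then show ?thesis
    using assms by (simp add: gderiv_def)
qed

lemma norm_sum_Basis_le:
  fixes c :: "'a::euclidean_space \<Rightarrow> real"
  assumes "\<forall>b\<in>Basis. \<bar>c b\<bar> \<le> M"
  shows "norm (\<Sum>b\<in>Basis. c b *\<^sub>R b) \<le> real DIM('a) * M"
proof -
  have "norm (\<Sum>b\<in>Basis. c b *\<^sub>R b) \<le> (\<Sum>b\<in>(Basis::'a set). \<bar>c b\<bar>)"
    by (rule order_trans[OF norm_sum]) simp
  also have "\<dots> \<le> real DIM('a) * M"
    using sum_bounded_above[of Basis "\<lambda>b. \<bar>c b\<bar>" M] assms by simp
  finally show ?thesis .
qed

lemma gderiv_along_embedding:
  fixes f :: "'c::euclidean_space \<Rightarrow> real" and \<iota> :: "'a::euclidean_space \<Rightarrow> 'c"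
  assumes "f differentiable at (q + \<iota> u)" and "linear \<iota>" and "\<iota> ` Basis \<subseteq> Basis"
    and "\<forall>e\<in>Basis. \<bar>frechet_derivative f (at (q + \<iota> u)) e\<bar> \<le> M"
  shows "\<exists>g. GDERIV (\<lambda>w. f (q + \<iota> w)) u :> g \<and> norm g \<le> real DIM('a) * M"
proof -
  let ?D = "frechet_derivative f (at (q + \<iota> u))"
  have "((\<lambda>w. q + \<iota> w) has_derivative \<iota>) (at u)"
    using has_derivative_add[OF has_derivative_const linear_imp_has_derivative[OF \<open>linear \<iota>\<close>]]
    by simp
  then have "((\<lambda>w. f (q + \<iota> w)) has_derivative (\<lambda>h. ?D (\<iota> h))) (at u)"
    using assms(1) by (auto intro: has_derivative_compose simp: frechet_derivative_works)
  then have "GDERIV (\<lambda>w. f (q + \<iota> w)) u :> (\<Sum>b\<in>Basis. ?D (\<iota> b) *\<^sub>R b)"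
    by (rule gderiv_of_has_derivative)
  moreover have "norm (\<Sum>b\<in>Basis. ?D (\<iota> b) *\<^sub>R b) \<le> real DIM('a) * M"
    using assms(3,4) by (intro norm_sum_Basis_le) auto
  ultimately show ?thesis by blast
qed

lemma partial_gradients_bounded:
  fixes f :: "('a::euclidean_space \<times> 'b::euclidean_space) \<times> 'c::euclidean_space \<Rightarrow> real"
  assumes "f differentiable at ((u, v), t)"
    and "\<forall>e\<in>Basis. \<bar>frechet_derivative f (at ((u, v), t)) e\<bar> \<le> M"
  shows "\<exists>g. GDERIV (\<lambda>u'. f ((u', v), t)) u :> g \<and> norm g \<le> real DIM('a) * M"
    and "\<exists>g. GDERIV (\<lambda>v'. f ((u, v'), t)) v :> g \<and> norm g \<le> real DIM('b) * M"
proof -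
  have "\<exists>g. GDERIV (\<lambda>u'. f (((0, v), t) + ((u', 0), 0))) u :> g \<and> norm g \<le> real DIM('a) * M"
    using assms by (intro gderiv_along_embedding) (auto simp: linear_iff Basis_prod_def)
  then show "\<exists>g. GDERIV (\<lambda>u'. f ((u', v), t)) u :> g \<and> norm g \<le> real DIM('a) * M"
    by simp
  have "\<exists>g. GDERIV (\<lambda>v'. f (((u, 0), t) + ((0, v'), 0))) v :> g \<and> norm g \<le> real DIM('b) * M"
    using assms by (intro gderiv_along_embedding) (auto simp: linear_iff Basis_prod_def)
  then show "\<exists>g. GDERIV (\<lambda>v'. f ((u, v'), t)) v :> g \<and> norm g \<le> real DIM('b) * M"
    by simp
qed

lemma Ck_periodic_gradient_bounded:
  fixes V :: "'a::euclidean_space \<Rightarrow> real"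
  assumes "Ck k V" and "1 \<le> k" and periodic: "\<forall>x. \<forall>e\<in>Basis. V (x + p *\<^sub>R e) = V x" and "p > 0"
  obtains C where "\<forall>u. \<exists>g. GDERIV V u :> g \<and> norm g \<le> C"
proof -
  define \<phi> where "\<phi> x = (\<Sum>b\<in>Basis. \<bar>frechet_derivative V (at x) b\<bar>)" for x
  have "continuous_on UNIV \<phi>"
    unfolding \<phi>_def using Ck_continuous_partial[OF assms(1,2)] by (intro continuous_intros) auto
  moreover have "\<forall>x. \<forall>e\<in>Basis. \<phi> (x + p *\<^sub>R e) = \<phi> x"
  proof (intro allI ballI)
    fix x and e :: 'a assume "e \<in> Basis"
    have "frechet_derivative V (at (x + p *\<^sub>R e)) = frechet_derivative V (at x)"
      using periodic \<open>e \<in> Basis\<close> Ck_differentiable[OF assms(1,2)] by (intro frechet_derivative_periodic) auto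
    then show "\<phi> (x + p *\<^sub>R e) = \<phi> x"
      by (simp add: \<phi>_def)
  qed
  ultimately obtain C where C: "\<And>x. \<bar>\<phi> x\<bar> \<le> C"
    using periodic_continuous_bounded \<open>p > 0\<close> by blast
  have "GDERIV V u :> (\<Sum>b\<in>Basis. frechet_derivative V (at u) b *\<^sub>R b) \<and>
      norm (\<Sum>b\<in>Basis. frechet_derivative V (at u) b *\<^sub>R b) \<le> C" for u
  proof
    show "GDERIV V u :> (\<Sum>b\<in>Basis. frechet_derivative V (at u) b *\<^sub>R b)"
      using Ck_differentiable[OF assms(1,2)] by (intro gderiv_of_has_derivative) (simp add: frechet_derivative_works)
    have "norm (\<Sum>b\<in>Basis. frechet_derivative V (at u) b *\<^sub>R b) \<le> \<phi> u"
      unfolding \<phi>_def by (rule order_trans[OF norm_sum]) simp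
    then show "norm (\<Sum>b\<in>Basis. frechet_derivative V (at u) b *\<^sub>R b) \<le> C"
      using C[of u] by linarith
  qed
  then show ?thesis
    using that by blast
qed

lemma periodic_Ck_norm_le_bounds:
  fixes f :: "('a::euclidean_space \<times> 'b::euclidean_space) \<times> 'c::euclidean_space \<Rightarrow> real"
  assumes norm_le: "Ck_norm_le k f ((cbox 0 (\<Sum>e\<in>Basis. p *\<^sub>R e) \<times> Y) \<times> UNIV) M" and "1 \<le> k" and "p > 0"
    and periodic: "\<forall>u v t. \<forall>e\<in>Basis. f ((u + p *\<^sub>R e, v), t) = f ((u, v), t)"
    and diff: "\<forall>q. f differentiable at q"
    and "v \<in> Y"
  shows "\<bar>f ((u, v), t)\<bar> \<le> M"
    and "\<forall>e\<in>Basis. \<bar>frechet_derivative f (at ((u, v), t)) e\<bar> \<le> M"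
proof -
  obtain u' where "u' \<in> cbox 0 (\<Sum>e\<in>Basis. p *\<^sub>R e)" "f ((u, v), t) = f ((u', v), t)"
    using periodic_eq_at_cube_point[of "\<lambda>u. f ((u, v), t)"] periodic \<open>p > 0\<close> by blast
  then show "\<bar>f ((u, v), t)\<bar> \<le> M"
    using Ck_norm_le_value[OF norm_le] \<open>v \<in> Y\<close> by simp
  show "\<forall>e\<in>Basis. \<bar>frechet_derivative f (at ((u, v), t)) e\<bar> \<le> M"
  proof
    fix e :: "('a \<times> 'b) \<times> 'c" assume "e \<in> Basis"
    have "frechet_derivative f (at ((u + p *\<^sub>R b, v), t)) = frechet_derivative f (at ((u, v), t))"
      if "b \<in> Basis" for u b
    proof -
      have "\<forall>q. f (q + ((p *\<^sub>R b, 0), 0)) = f q"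
        using periodic that by (simp add: split_paired_all)
      from frechet_derivative_periodic[OF this diff[rule_format, of "((u, v), t)"]] show ?thesis
        by simp
    qed
    then have "\<forall>u. \<forall>b\<in>Basis. frechet_derivative f (at ((u + p *\<^sub>R b, v), t)) e
        = frechet_derivative f (at ((u, v), t)) e"
      by simp
    then obtain u' where "u' \<in> cbox 0 (\<Sum>e\<in>Basis. p *\<^sub>R e)"
        "frechet_derivative f (at ((u, v), t)) e = frechet_derivative f (at ((u', v), t)) e"
      using periodic_eq_at_cube_point[of "\<lambda>u. frechet_derivative f (at ((u, v), t)) e"] \<open>p > 0\<close> by blast
    then show "\<bar>frechet_derivative f (at ((u, v), t)) e\<bar> \<le> M"
      using Ck_norm_le_partial[OF norm_le \<open>1 \<le> k\<close>] \<open>v \<in> Y\<close> \<open>e \<in> Basis\<close> by simp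
  qed
qed

section \<open>Energy drift along orbits\<close>

lemma abs_inner_diff_le:
  fixes a b c d :: "'a::real_inner"
  shows "\<bar>a \<bullet> d - b \<bullet> c\<bar> \<le> norm a * norm d + norm b * norm c"
  by (rule order_trans[OF abs_triangle_ineq4 add_mono]) (simp_all add: Cauchy_Schwarz_ineq2)

lemma inner_symmetric_matrix:
  fixes A :: "real^'n^'n"
  assumes "transpose A = A"
  shows "v \<bullet> (A *v w) = w \<bullet> (A *v v)"
proof -
  have "v \<bullet> (A *v w) = (v v* A) \<bullet> w"
    by (simp add: dot_lmul_matrix)
  also have "v v* A = A *v v"
    using vector_transpose_matrix[of v A] assms by simp
  finally show ?thesis
    by (simp add: inner_commute)
qed

lemma has_derivative_kinetic_minus_potential:
  fixes A :: "real^'n^'n" and V :: "real^'n \<Rightarrow> real"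
  assumes "transpose A = A" and "GDERIV V u :> g"
  shows "((\<lambda>z. 1/2 * (snd z \<bullet> (A *v snd z)) - V (fst z)) has_derivative
      (\<lambda>h. fst h \<bullet> (- g) + snd h \<bullet> (A *v v))) (at (u, v))"
proof -
  have kinetic: "((\<lambda>z. snd z \<bullet> (A *v snd z)) has_derivative
      (\<lambda>h. v \<bullet> (A *v snd h) + snd h \<bullet> (A *v v))) (at (u, v))"
    by (auto intro!: derivative_eq_intros bounded_linear.has_derivative[OF matrix_vector_mul_bounded_linear])
  have potential: "((\<lambda>z. V (fst z)) has_derivative (\<lambda>h. fst h \<bullet> g)) (at (u, v))"
    using has_derivative_compose[OF has_derivative_fst[OF has_derivative_ident]] assms(2)
    by (auto simp: gderiv_def)
  have "((\<lambda>z. 1/2 * (snd z \<bullet> (A *v snd z)) - V (fst z)) has_derivative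
      (\<lambda>h. 1/2 * (v \<bullet> (A *v snd h) + snd h \<bullet> (A *v v)) - fst h \<bullet> g)) (at (u, v))"
    by (intro has_derivative_diff has_derivative_mult_right kinetic potential)
  then show ?thesis
    using inner_symmetric_matrix[OF assms(1), of v] by simp
qed

lemma ham_orbit_energy_derivative:
  fixes H :: "real^2 \<Rightarrow> real^2 \<Rightarrow> real" and P :: "real^2 \<Rightarrow> real^2 \<Rightarrow> real \<Rightarrow> real"
  assumes orbit: "ham_orbit (\<lambda>u v s. H u v + P u v s) x y s0 s1" and "s \<in> {s0..s1}"
    and H0_deriv: "((\<lambda>z. H (fst z) (snd z)) has_derivative (\<lambda>h. fst h \<bullet> a + snd h \<bullet> b)) (at (x s, y s))"
    and P_grad_x: "GDERIV (\<lambda>u. P u (y s) s) (x s) :> c"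
    and P_grad_y: "GDERIV (\<lambda>v. P (x s) v s) (y s) :> d"
  shows "((\<lambda>t. H (x t) (y t)) has_real_derivative (a \<bullet> d - b \<bullet> c)) (at s within {s0..s1})"
proof -
  obtain gx gy where
    gx: "GDERIV (\<lambda>u. H u (y s) + P u (y s) s) (x s) :> gx" and
    gy: "GDERIV (\<lambda>v. H (x s) v + P (x s) v s) (y s) :> gy" and
    x': "(x has_vector_derivative gy) (at s within {s0..s1})" and
    y': "(y has_vector_derivative - gx) (at s within {s0..s1})"
    using orbit \<open>s \<in> {s0..s1}\<close> unfolding ham_orbit_def by blast
  have "((\<lambda>u. (u, y s)) has_derivative (\<lambda>h. (h, 0))) (at (x s))"
    by (auto intro!: derivative_eq_intros)
  from has_derivative_compose[OF this H0_deriv] have "GDERIV (\<lambda>u. H u (y s)) (x s) :> a"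
    by (simp add: gderiv_def)
  then have "gx = a + c"
    using gderiv_unique[OF gx GDERIV_add] P_grad_x by blast
  have "((\<lambda>v. (x s, v)) has_derivative (\<lambda>h. (0, h))) (at (y s))"
    by (auto intro!: derivative_eq_intros)
  from has_derivative_compose[OF this H0_deriv] have "GDERIV (\<lambda>v. H (x s) v) (y s) :> b"
    by (simp add: gderiv_def)
  then have "gy = b + d"
    using gderiv_unique[OF gy GDERIV_add] P_grad_y by blast
  have "((\<lambda>t. (x t, y t)) has_derivative (\<lambda>h. (h *\<^sub>R gy, h *\<^sub>R - gx))) (at s within {s0..s1})"
    using x' y' by (auto simp: has_vector_derivative_def intro: has_derivative_Pair)
  from has_derivative_compose[OF this H0_deriv]
  have "((\<lambda>t. H (x t) (y t)) has_derivative (\<lambda>h. (gy \<bullet> a - gx \<bullet> b) * h)) (at s within {s0..s1})"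
    by (simp add: algebra_simps)
  moreover have "gy \<bullet> a - gx \<bullet> b = a \<bullet> d - b \<bullet> c"
    unfolding \<open>gx = a + c\<close> \<open>gy = b + d\<close> by (simp add: inner_add_left inner_commute[of d a] inner_commute[of c b] inner_commute[of a b])
  ultimately show ?thesis
    by (simp add: has_field_derivative_def)
qed

lemma G_eps_orbit_unperturbed_derivative:
  fixes A :: "real^2^2" and V :: "real^2 \<Rightarrow> real" and Y :: "(real^2) set"
    and R :: "real \<Rightarrow> real^2 \<Rightarrow> real^2 \<Rightarrow> real \<Rightarrow> real" and \<epsilon> :: real
  defines "fR \<equiv> \<lambda>((u, v), \<tau>). R \<epsilon> u v \<tau>"
  assumes A_sym: "transpose A = A"
    and A_bound: "\<forall>v\<in>Y. norm (A *v v) \<le> CA"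
    and V_grad: "\<forall>u. \<exists>g. GDERIV V u :> g \<and> norm g \<le> CV"
    and R_diff: "\<forall>q. fR differentiable at q"
    and DR_bound: "\<forall>u v \<tau>. v \<in> Y \<longrightarrow> (\<forall>e\<in>Basis. \<bar>frechet_derivative fR (at ((u, v), \<tau>)) e\<bar> \<le> M)"
    and orbit: "ham_orbit (G_eps A V R \<sigma> \<omega>3 \<epsilon>) x y s0 s1"
    and "s \<in> {s0..s1}" and "y s \<in> Y"
  shows "\<exists>d. ((\<lambda>t. 1/2 * (y t \<bullet> (A *v y t)) - V (x t)) has_real_derivative d) (at s within {s0..s1})
    \<and> \<bar>d\<bar> \<le> \<epsilon> powr \<sigma> * (2 * M * (CA + CV))"
proof -
  define E where "E = \<epsilon> powr \<sigma>"
  define \<tau> where "\<tau> = \<omega>3 * s / sqrt \<epsilon>"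
  have G_split: "G_eps A V R \<sigma> \<omega>3 \<epsilon> =
      (\<lambda>u v t. (1/2 * (v \<bullet> (A *v v)) - V u) + E * R \<epsilon> u v (\<omega>3 * t / sqrt \<epsilon>))"
    by (simp add: fun_eq_iff G_eps_def E_def)
  obtain gV where gV: "GDERIV V (x s) :> gV" "norm gV \<le> CV"
    using V_grad by blast
  obtain gx where gx: "GDERIV (\<lambda>u. R \<epsilon> u (y s) \<tau>) (x s) :> gx" "norm gx \<le> 2 * M"
    using partial_gradients_bounded(1)[of fR "x s" "y s" \<tau> M] R_diff DR_bound \<open>y s \<in> Y\<close>
    by (auto simp: fR_def)
  obtain gy where gy: "GDERIV (\<lambda>v. R \<epsilon> (x s) v \<tau>) (y s) :> gy" "norm gy \<le> 2 * M"
    using partial_gradients_bounded(2)[of fR "x s" "y s" \<tau> M] R_diff DR_bound \<open>y s \<in> Y\<close>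
    by (auto simp: fR_def)
  have "((\<lambda>t. 1/2 * (y t \<bullet> (A *v y t)) - V (x t)) has_real_derivative
      ((- gV) \<bullet> (E *\<^sub>R gy) - (A *v y s) \<bullet> (E *\<^sub>R gx))) (at s within {s0..s1})"
  proof (rule ham_orbit_energy_derivative[where H = "\<lambda>u v. 1/2 * (v \<bullet> (A *v v)) - V u"])
    show "ham_orbit (\<lambda>u v t. (1/2 * (v \<bullet> (A *v v)) - V u) + E * R \<epsilon> u v (\<omega>3 * t / sqrt \<epsilon>)) x y s0 s1"
      using orbit by (simp only: G_split)
    show "((\<lambda>z. 1/2 * (snd z \<bullet> (A *v snd z)) - V (fst z)) has_derivative
        (\<lambda>h. fst h \<bullet> (- gV) + snd h \<bullet> (A *v y s))) (at (x s, y s))"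
      by (rule has_derivative_kinetic_minus_potential[OF A_sym gV(1)])
    show "GDERIV (\<lambda>u. E * R \<epsilon> u (y s) (\<omega>3 * s / sqrt \<epsilon>)) (x s) :> E *\<^sub>R gx"
      using GDERIV_mult[OF GDERIV_const gx(1)] by (simp add: \<tau>_def)
    show "GDERIV (\<lambda>v. E * R \<epsilon> (x s) v (\<omega>3 * s / sqrt \<epsilon>)) (y s) :> E *\<^sub>R gy"
      using GDERIV_mult[OF GDERIV_const gy(1)] by (simp add: \<tau>_def)
  qed (use \<open>s \<in> {s0..s1}\<close> in simp)
  moreover have "\<bar>(- gV) \<bullet> (E *\<^sub>R gy) - (A *v y s) \<bullet> (E *\<^sub>R gx)\<bar> \<le> E * (2 * M * (CA + CV))"
  proof -
    have "\<bar>(- gV) \<bullet> (E *\<^sub>R gy) - (A *v y s) \<bullet> (E *\<^sub>R gx)\<bar>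
        \<le> norm gV * (E * norm gy) + norm (A *v y s) * (E * norm gx)"
      using abs_inner_diff_le[of "- gV" "E *\<^sub>R gy" "A *v y s" "E *\<^sub>R gx"] by (simp add: E_def)
    also have "\<dots> \<le> CV * (E * (2 * M)) + CA * (E * (2 * M))"
      using gV(2) gx(2) gy(2) A_bound \<open>y s \<in> Y\<close>
      by (intro add_mono mult_mono mult_left_mono) (auto simp: E_def intro: order_trans[OF norm_ge_zero])
    finally show ?thesis
      by (simp add: algebra_simps)
  qed
  ultimately show ?thesis
    unfolding E_def by blast
qed

lemma G_eps_orbit_drift:
  fixes A :: "real^2^2" and V :: "real^2 \<Rightarrow> real" and Y :: "(real^2) set"
    and R :: "real \<Rightarrow> real^2 \<Rightarrow> real^2 \<Rightarrow> real \<Rightarrow> real" and \<epsilon> :: real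
  defines "fR \<equiv> \<lambda>((u, v), \<tau>). R \<epsilon> u v \<tau>"
  assumes A_sym: "transpose A = A"
    and A_bound: "\<forall>v\<in>Y. norm (A *v v) \<le> CA"
    and V_grad: "\<forall>u. \<exists>g. GDERIV V u :> g \<and> norm g \<le> CV"
    and R_diff: "\<forall>q. fR differentiable at q"
    and R_bound: "\<forall>u v \<tau>. v \<in> Y \<longrightarrow> \<bar>R \<epsilon> u v \<tau>\<bar> \<le> M"
    and DR_bound: "\<forall>u v \<tau>. v \<in> Y \<longrightarrow> (\<forall>e\<in>Basis. \<bar>frechet_derivative fR (at ((u, v), \<tau>)) e\<bar> \<le> M)"
    and "s0 \<le> s1" and orbit: "ham_orbit (G_eps A V R \<sigma> \<omega>3 \<epsilon>) x y s0 s1"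
    and in_Y: "\<forall>s\<in>{s0..s1}. y s \<in> Y"
  shows "\<bar>G_eps A V R \<sigma> \<omega>3 \<epsilon> (x s1) (y s1) s1 - G_eps A V R \<sigma> \<omega>3 \<epsilon> (x s0) (y s0) s0\<bar>
    \<le> \<epsilon> powr \<sigma> * (2 * M * (CA + CV) * (s1 - s0) + 2 * M)"
proof -
  define E where "E = \<epsilon> powr \<sigma>"
  define H where "H t = 1/2 * (y t \<bullet> (A *v y t)) - V (x t)" for t
  define P where "P t = R \<epsilon> (x t) (y t) (\<omega>3 * t / sqrt \<epsilon>)" for t
  have G_split: "G_eps A V R \<sigma> \<omega>3 \<epsilon> (x t) (y t) t = H t + E * P t" for t
    by (simp add: G_eps_def H_def P_def E_def)
  have "\<forall>s\<in>{s0..s1}. \<exists>d. (H has_real_derivative d) (at s within {s0..s1}) \<and> \<bar>d\<bar> \<le> E * (2 * M * (CA + CV))"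
    using G_eps_orbit_unperturbed_derivative[OF A_sym A_bound V_grad R_diff[unfolded fR_def]
        DR_bound[unfolded fR_def] orbit] in_Y
    unfolding H_def E_def by blast
  then obtain d where d: "\<And>s. s \<in> {s0..s1} \<Longrightarrow>
      (H has_real_derivative d s) (at s within {s0..s1}) \<and> \<bar>d s\<bar> \<le> E * (2 * M * (CA + CV))"
    by metis
  have "\<bar>H s1 - H s0\<bar> \<le> E * (2 * M * (CA + CV)) * (s1 - s0)"
    using field_differentiable_bound[of "{s0..s1}" H d "E * (2 * M * (CA + CV))" s1 s0] d \<open>s0 \<le> s1\<close>
    by auto
  moreover have "\<bar>E * P s1 - E * P s0\<bar> \<le> E * (2 * M)"
  proof -
    have "\<bar>P s1 - P s0\<bar> \<le> 2 * M"
    proof -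
      have "\<bar>P s1\<bar> \<le> M" "\<bar>P s0\<bar> \<le> M"
        using R_bound in_Y \<open>s0 \<le> s1\<close> by (auto simp: P_def)
      then show ?thesis
        using abs_triangle_ineq4[of "P s1" "P s0"] by linarith
    qed
    then show ?thesis
      by (simp add: E_def abs_mult mult_left_mono flip: right_diff_distrib)
  qed
  ultimately show ?thesis
    unfolding G_split E_def by (simp add: algebra_simps abs_triangle_ineq[THEN order_trans])
qed

lemma affine_le_abs_bound:
  fixes a b t E :: real
  assumes "0 \<le> t" and "0 \<le> E"
  shows "E * (a * t + b) \<le> (\<bar>a\<bar> + \<bar>b\<bar> + 1) * \<bar>t + 1\<bar> * E"
proof -
  have "a * t \<le> \<bar>a\<bar> * t" and "0 \<le> \<bar>b\<bar> * t"
    using \<open>0 \<le> t\<close> by (auto intro: mult_right_mono)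
  moreover have "(\<bar>a\<bar> + \<bar>b\<bar> + 1) * (t + 1) = \<bar>a\<bar> * t + \<bar>b\<bar> * t + t + \<bar>a\<bar> + \<bar>b\<bar> + 1"
    by (simp add: algebra_simps)
  ultimately have "a * t + b \<le> (\<bar>a\<bar> + \<bar>b\<bar> + 1) * (t + 1)"
    using abs_ge_self[of b] abs_ge_zero[of a] \<open>0 \<le> t\<close> by linarith
  then show ?thesis
    using assms by (simp add: mult.commute mult_left_mono)
qed

lemma G_eps_orbit_drift_uniform:
  fixes A :: "real^2^2" and V :: "real^2 \<Rightarrow> real" and \<Omega> :: "((real^2) \<times> (real^2)) set"
    and R :: "real \<Rightarrow> real^2 \<Rightarrow> real^2 \<Rightarrow> real \<Rightarrow> real" and I :: "real set"
  assumes A_sym: "transpose A = A" and "bounded (snd ` \<Omega>)"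
    and V_grad: "\<forall>u. \<exists>g. GDERIV V u :> g \<and> norm g \<le> CV"
    and R_diff: "\<forall>\<epsilon>\<in>I. \<forall>q. (\<lambda>((u, v), \<tau>). R \<epsilon> u v \<tau>) differentiable at q"
    and R_bound: "\<forall>\<epsilon>\<in>I. \<forall>u v \<tau>. v \<in> snd ` \<Omega> \<longrightarrow> \<bar>R \<epsilon> u v \<tau>\<bar> \<le> M"
    and DR_bound: "\<forall>\<epsilon>\<in>I. \<forall>u v \<tau>. v \<in> snd ` \<Omega> \<longrightarrow>
      (\<forall>e\<in>Basis. \<bar>frechet_derivative (\<lambda>((u, v), \<tau>). R \<epsilon> u v \<tau>) (at ((u, v), \<tau>)) e\<bar> \<le> M)"
  shows "\<exists>K>0. \<forall>\<epsilon>\<in>I. \<forall>s0 s1 (x::real \<Rightarrow> real^2) (y::real \<Rightarrow> real^2).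
    s0 \<le> s1 \<and> ham_orbit (G_eps A V R \<sigma> \<omega>3 \<epsilon>) x y s0 s1 \<and> (\<forall>s\<in>{s0..s1}. (x s, y s) \<in> \<Omega>) \<longrightarrow>
    \<bar>G_eps A V R \<sigma> \<omega>3 \<epsilon> (x s1) (y s1) s1 - G_eps A V R \<sigma> \<omega>3 \<epsilon> (x s0) (y s0) s0\<bar>
      \<le> K * \<bar>s1 - s0 + 1\<bar> * \<epsilon> powr \<sigma>"
proof -
  obtain CA where CA: "\<forall>v\<in>snd ` \<Omega>. norm (A *v v) \<le> CA"
    using bounded_linear_image[OF \<open>bounded (snd ` \<Omega>)\<close> matrix_vector_mul_bounded_linear[of A]]
    unfolding bounded_iff by blast
  let ?K = "\<bar>2 * M * (CA + CV)\<bar> + \<bar>2 * M\<bar> + 1"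
  have "\<bar>G_eps A V R \<sigma> \<omega>3 \<epsilon> (x s1) (y s1) s1 - G_eps A V R \<sigma> \<omega>3 \<epsilon> (x s0) (y s0) s0\<bar>
      \<le> ?K * \<bar>s1 - s0 + 1\<bar> * \<epsilon> powr \<sigma>"
    if "\<epsilon> \<in> I" and "s0 \<le> s1" and orbit: "ham_orbit (G_eps A V R \<sigma> \<omega>3 \<epsilon>) x y s0 s1"
      and in_\<Omega>: "\<forall>s\<in>{s0..s1}. (x s, y s) \<in> \<Omega>" for \<epsilon> s0 s1 x y
  proof -
    have "\<forall>s\<in>{s0..s1}. y s \<in> snd ` \<Omega>"
      using in_\<Omega> by force
    with \<open>\<epsilon> \<in> I\<close> \<open>s0 \<le> s1\<close> orbit
    have "\<bar>G_eps A V R \<sigma> \<omega>3 \<epsilon> (x s1) (y s1) s1 - G_eps A V R \<sigma> \<omega>3 \<epsilon> (x s0) (y s0) s0\<bar>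
        \<le> \<epsilon> powr \<sigma> * (2 * M * (CA + CV) * (s1 - s0) + 2 * M)"
      using R_diff R_bound DR_bound
      by (intro G_eps_orbit_drift[where R = R and \<epsilon> = \<epsilon>, OF A_sym CA V_grad]) simp_all
    also have "\<dots> \<le> ?K * \<bar>s1 - s0 + 1\<bar> * \<epsilon> powr \<sigma>"
      using \<open>s0 \<le> s1\<close> by (intro affine_le_abs_bound) simp_all
    finally show ?thesis .
  qed
  moreover have "?K > 0"
    by (simp add: add_nonneg_pos)
  ultimately show ?thesis
    by blast
qed

theorem lemma5p2:
  fixes A :: "real^2^2" and V :: "real^2 \<Rightarrow> real"
    and R :: "real \<Rightarrow> real^2 \<Rightarrow> real^2 \<Rightarrow> real \<Rightarrow> real"
    and \<sigma> \<omega>3 \<epsilon>0 :: real and r :: nat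
  assumes A_sym: "transpose A = A"
    and A_pos: "\<forall>v::real^2. v \<noteq> 0 \<longrightarrow> v \<bullet> (A *v v) > 0"
    and r_ge: "r \<ge> 1"
    and V_Cr: "Ck r V"
    and V_per: "\<forall>x. \<forall>e\<in>(Basis::(real^2) set). V (x + (2*pi) *\<^sub>R e) = V x"
    and \<sigma>_range: "0 < \<sigma>" "\<sigma> < 1/2"
    and \<omega>3_nz: "\<omega>3 \<noteq> 0"
    and \<epsilon>0_pos: "\<epsilon>0 > 0"
    and R_per_x: "\<forall>\<epsilon> x y \<tau>. \<forall>e\<in>(Basis::(real^2) set). R \<epsilon> (x + (2*pi) *\<^sub>R e) y \<tau> = R \<epsilon> x y \<tau>"
    and R_per_\<tau>: "\<forall>\<epsilon> x y \<tau>. R \<epsilon> x y (\<tau> + 2*pi) = R \<epsilon> x y \<tau>"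
    and R_C4: "\<forall>\<epsilon>\<in>{0<..\<epsilon>0}.
        Ck 4 (\<lambda>((x,y),\<tau>). R \<epsilon> x y \<tau>) \<and>
        (\<forall>e\<in>(\<lambda>u. (u, 0)) ` (Basis :: ((real^2) \<times> (real^2)) set).
            Ck 4 (pderivs [e] (\<lambda>((x,y),\<tau>). R \<epsilon> x y \<tau>)))"
    and R_bounds: "\<forall>B::((real^2) \<times> (real^2)) set. bounded B \<longrightarrow> (\<exists>M. \<forall>\<epsilon>\<in>{0<..\<epsilon>0}.
        Ck_norm_le 4 (\<lambda>((x,y),\<tau>). R \<epsilon> x y \<tau>) (B \<times> UNIV) M \<and>
        (\<forall>e\<in>(\<lambda>u. (u, 0)) ` (Basis :: ((real^2) \<times> (real^2)) set).
            Ck_norm_le 4 (pderivs [e] (\<lambda>((x,y),\<tau>). R \<epsilon> x y \<tau>)) (B \<times> UNIV) M))"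
  shows "\<forall>\<Omega>::((real^2) \<times> (real^2)) set. bounded (snd ` \<Omega>) \<longrightarrow>
    (\<exists>K>0. \<forall>\<epsilon>\<in>{0<..\<epsilon>0}. \<forall>s0 s1 (x::real \<Rightarrow> real^2) (y::real \<Rightarrow> real^2).
       s0 \<le> s1 \<and> ham_orbit (G_eps A V R \<sigma> \<omega>3 \<epsilon>) x y s0 s1 \<and>
       (\<forall>s\<in>{s0..s1}. (x s, y s) \<in> \<Omega>) \<longrightarrow>
       \<bar>G_eps A V R \<sigma> \<omega>3 \<epsilon> (x s1) (y s1) s1 - G_eps A V R \<sigma> \<omega>3 \<epsilon> (x s0) (y s0) s0\<bar>
         \<le> K * \<bar>s1 - s0 + 1\<bar> * \<epsilon> powr \<sigma>)"
proof (intro allI impI)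
  fix \<Omega> :: "((real^2) \<times> (real^2)) set"
  assume "bounded (snd ` \<Omega>)"
  let ?fR = "\<lambda>\<epsilon>. \<lambda>((x, y), \<tau>). R \<epsilon> x y \<tau>"
  have two_pi: "(0::real) < 2 * pi"
    by simp
  have "bounded (cbox 0 (\<Sum>e\<in>Basis. (2*pi) *\<^sub>R e) \<times> snd ` \<Omega>)"
    using \<open>bounded (snd ` \<Omega>)\<close> by (intro bounded_Times bounded_cbox)
  from R_bounds[rule_format, OF this] obtain M where M: "\<forall>\<epsilon>\<in>{0<..\<epsilon>0}.
      Ck_norm_le 4 (?fR \<epsilon>) ((cbox 0 (\<Sum>e\<in>Basis. (2*pi) *\<^sub>R e) \<times> snd ` \<Omega>) \<times> UNIV) M"
    by blast
  have R_diff: "\<forall>\<epsilon>\<in>{0<..\<epsilon>0}. \<forall>q. ?fR \<epsilon> differentiable at q"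
  proof (intro ballI allI)
    fix \<epsilon> q assume "\<epsilon> \<in> {0<..\<epsilon>0}"
    then have "Ck 4 (?fR \<epsilon>)"
      using R_C4 by blast
    then show "?fR \<epsilon> differentiable at q"
      by (rule Ck_differentiable) simp
  qed
  have R_periodic: "\<forall>u v t. \<forall>e\<in>Basis. ?fR \<epsilon> ((u + (2*pi) *\<^sub>R e, v), t) = ?fR \<epsilon> ((u, v), t)" for \<epsilon>
    using R_per_x by simp
  have R_norm_bounds: "\<bar>R \<epsilon> u v \<tau>\<bar> \<le> M \<and> (\<forall>e\<in>Basis. \<bar>frechet_derivative (?fR \<epsilon>) (at ((u, v), \<tau>)) e\<bar> \<le> M)"
    if "\<epsilon> \<in> {0<..\<epsilon>0}" and "v \<in> snd ` \<Omega>" for \<epsilon> u v \<tau>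
    using periodic_Ck_norm_le_bounds[OF M[rule_format, OF that(1)] _ two_pi R_periodic
        bspec[OF R_diff that(1)] that(2)] by simp
  obtain CV where CV: "\<forall>u. \<exists>g. GDERIV V u :> g \<and> norm g \<le> CV"
    using Ck_periodic_gradient_bounded[OF V_Cr r_ge V_per two_pi] by blast
  show "\<exists>K>0. \<forall>\<epsilon>\<in>{0<..\<epsilon>0}. \<forall>s0 s1 (x::real \<Rightarrow> real^2) (y::real \<Rightarrow> real^2).
      s0 \<le> s1 \<and> ham_orbit (G_eps A V R \<sigma> \<omega>3 \<epsilon>) x y s0 s1 \<and> (\<forall>s\<in>{s0..s1}. (x s, y s) \<in> \<Omega>) \<longrightarrow>
      \<bar>G_eps A V R \<sigma> \<omega>3 \<epsilon> (x s1) (y s1) s1 - G_eps A V R \<sigma> \<omega>3 \<epsilon> (x s0) (y s0) s0\<bar>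
        \<le> K * \<bar>s1 - s0 + 1\<bar> * \<epsilon> powr \<sigma>"
    by (rule G_eps_orbit_drift_uniform[where M = M, OF A_sym \<open>bounded (snd ` \<Omega>)\<close> CV R_diff])
      (simp_all add: R_norm_bounds)
qed

end
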